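(* Let $1\le r<\infty$, $d\in\mathbb{N}$, $\varepsilon>0$. Let $a=\lceil(8/\varepsilon+3)^r\rceil$ and $M=\{k_j\}_{j=1}^\infty$ with $k_j=a^{j-1}$. Let $\bar m,\bar n\in[M]^d$ with $m_1<n_1<\dots<m_d<n_d$, let $k>n_d$, let $u=((a_s)_{s=1}^d,(b_s)_{s=1}^d,c)\in S_{\ell_\infty^{2d+1}}$, and let $F=(F_i)_{i=1}^k\colon S_{\ell_\infty^k}\to S_{\ell_r^k}$ be a step preserving function with $F_i(x(\bar m,u,k))=0$ for all $i\in(m_d,k]$. Then \[\|F(x(\bar m,u,k))-F(x(\bar n,u,k))\|_r>1-\varepsilon.\]
   Context: $S_{\ell_p^k}$ denotes the unit sphere of $(\mathbb{R}^k,\|\cdot\|_p)$. $[M]^d$ is the set of increasing $d$-tuples from $M$; $m_0=0$. $1_A\in\mathbb{R}^k$ is the indicator vector of $A$ and $1_{(a,b]}=1_{\{i:a<i\le b\}}$. With $P=2\mathbb{N}$ (even integers) and $P^c=\mathbb{N}\setminus P$: $x(\bar m,u,k)=\sum_{s=1}^da_s1_{(m_{s-1},m_s]\cap P}+\sum_{s=1}^db_s1_{(m_{s-1},m_s]\cap P^c}+c1_{(m_d,k]}$. $F$ is step preserving if for all $x$ and $i,j$, $x_i=x_j$ implies $F_i(x)=F_j(x)$. *)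

theory Defs
  imports "HOL-Analysis.Analysis"
begin

text \<open>Vectors of \<open>\<real>\<^sup>k\<close> are represented as functions \<open>nat \<Rightarrow> real\<close>
  supported on the coordinates \<open>{1..k}\<close>.\<close>

definition norm_inf :: "nat \<Rightarrow> (nat \<Rightarrow> real) \<Rightarrow> real" where
  "norm_inf k x = Max (insert 0 ((\<lambda>i. \<bar>x i\<bar>) ` {1..k}))"

definition norm_lp :: "real \<Rightarrow> nat \<Rightarrow> (nat \<Rightarrow> real) \<Rightarrow> real" where
  "norm_lp p k x = (\<Sum>i\<in>{1..k}. \<bar>x i\<bar> powr p) powr (1 / p)"

definition sphere_inf :: "nat \<Rightarrow> (nat \<Rightarrow> real) set" where
  "sphere_inf k = {x. (\<forall>i. i \<notin> {1..k} \<longrightarrow> x i = 0) \<and> norm_inf k x = 1}"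

definition sphere_lp :: "real \<Rightarrow> nat \<Rightarrow> (nat \<Rightarrow> real) set" where
  "sphere_lp p k = {x. (\<forall>i. i \<notin> {1..k} \<longrightarrow> x i = 0) \<and> norm_lp p k x = 1}"

definition step_preserving :: "nat \<Rightarrow> ((nat \<Rightarrow> real) \<Rightarrow> (nat \<Rightarrow> real)) \<Rightarrow> bool" where
  "step_preserving k F \<longleftrightarrow>
     (\<forall>x\<in>sphere_inf k. \<forall>i\<in>{1..k}. \<forall>j\<in>{1..k}. x i = x j \<longrightarrow> F x i = F x j)"

definition incr_tuples :: "nat set \<Rightarrow> nat \<Rightarrow> (nat \<Rightarrow> nat) set" where
  "incr_tuples M d = {m. (\<forall>s\<in>{1..d}. m s \<in> M) \<and> (\<forall>s\<in>{1..<d}. m s < m (Suc s))}"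

definition tup :: "(nat \<Rightarrow> nat) \<Rightarrow> nat \<Rightarrow> nat" where
  "tup m s = (if s = 0 then 0 else m s)"

definition indic :: "nat set \<Rightarrow> nat \<Rightarrow> real" where
  "indic A i = (if i \<in> A then 1 else 0)"

definition xvec :: "nat \<Rightarrow> (nat \<Rightarrow> nat) \<Rightarrow> (nat \<Rightarrow> real) \<Rightarrow> (nat \<Rightarrow> real) \<Rightarrow> real \<Rightarrow> nat \<Rightarrow> (nat \<Rightarrow> real)" where
  "xvec d m a b c k = (\<lambda>i.
      (\<Sum>s\<in>{1..d}. a s * indic ({tup m (s - 1)<..m s} \<inter> {i. even i}) i)
    + (\<Sum>s\<in>{1..d}. b s * indic ({tup m (s - 1)<..m s} \<inter> {i. odd i}) i)
    + c * indic {tup m d<..k} i)"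

definition in_sphere_u :: "nat \<Rightarrow> (nat \<Rightarrow> real) \<Rightarrow> (nat \<Rightarrow> real) \<Rightarrow> real \<Rightarrow> bool" where
  "in_sphere_u d a b c \<longleftrightarrow>
     Max ({\<bar>a s\<bar> | s. s \<in> {1..d}} \<union> {\<bar>b s\<bar> | s. s \<in> {1..d}} \<union> {\<bar>c\<bar>}) = 1"

end

(*
  Write x_m = x(m,u,k) and h_m = |F(x_m)|^r, a probability vector on {1..k}.  On the block
  (m_{s-1}, m_s] the vector x_m takes the value a_s at even and b_s at odd coordinates, so step
  preservation makes h_m depend only on the parity there.  The block splits into the short piece
  (m_{s-1}, n_{s-1}] and the gap (n_{s-1}, m_s]; since m_s >= A n_{s-1}, the gap contains about
  A/2 translates of the short piece by even amounts, so it carries all but a fraction O(1/A) of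
  the mass of the block.  As F(x_m) vanishes beyond m_d, h_m puts mass 1 - O(1/A) on the union G
  of the gaps.  For x_n the roles are exchanged: (n_{s-1}, m_s] is the short initial piece of the
  block (n_{s-1}, n_s] because n_s >= A m_s, so h_n puts mass O(1/A) on G.  Minkowski's inequality
  on G then gives a distance of at least 1 - O(1/A) - O(1/A)^{1/r}, which the choice of A makes
  larger than 1 - epsilon.
*)
theory Submission
  imports Defs
begin

section \<open>\<open>\<ell>\<^sub>r\<close> norms on finite index sets\<close>

definition lp_norm_on :: "real \<Rightarrow> nat set \<Rightarrow> (nat \<Rightarrow> real) \<Rightarrow> real" where
  "lp_norm_on p S f = (\<Sum>i\<in>S. \<bar>f i\<bar> powr p) powr (1 / p)"

lemma norm_lp_eq_lp_norm_on: "norm_lp p k f = lp_norm_on p {1..k} f"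
  by (simp add: norm_lp_def lp_norm_on_def)

lemma lp_norm_on_nonneg: "0 \<le> lp_norm_on p S f"
  by (simp add: lp_norm_on_def)

lemma lp_norm_on_powr: "0 < p \<Longrightarrow> lp_norm_on p S f powr p = (\<Sum>i\<in>S. \<bar>f i\<bar> powr p)"
  by (simp add: lp_norm_on_def powr_powr sum_nonneg)

lemma lp_norm_on_eq_0_iff:
  assumes "finite S" "0 < p"
  shows "lp_norm_on p S f = 0 \<longleftrightarrow> (\<forall>i\<in>S. f i = 0)"
  using assms by (simp add: lp_norm_on_def sum_nonneg_eq_0_iff)

lemma lp_norm_on_mono:
  assumes "finite T" "S \<subseteq> T" "0 < p"
  shows "lp_norm_on p S f \<le> lp_norm_on p T f"
  unfolding lp_norm_on_def using assms
  by (intro powr_mono2 sum_mono2) (auto intro: sum_nonneg)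

lemma convex_on_powr_nonneg:
  assumes "1 \<le> p"
  shows "convex_on {0..} (\<lambda>x::real. x powr p)"
proof (rule convex_onI)
  fix t x y :: real
  assume t: "0 < t" "t < 1" and xy: "x \<in> {0..}" "y \<in> {0..}"
  have shrink: "s powr p \<le> s" if "0 < s" "s \<le> 1" for s :: real
    using powr_le_one_le[OF that assms] .
  consider "0 < x" "0 < y" | "x = 0" | "y = 0" using xy by force
  then show "((1 - t) *\<^sub>R x + t *\<^sub>R y) powr p \<le> (1 - t) * x powr p + t * y powr p"
  proof cases
    case 1
    then show ?thesis using convex_onD[OF powr_convex[OF assms], of t x y] t by simp
  next
    case 2
    then show ?thesis
      using t xy shrink[of t] by (simp add: powr_mult mult_right_mono)
  next
    case 3
    then show ?thesis
      using t xy shrink[of "1 - t"] by (simp add: powr_mult mult_right_mono)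
  qed
qed auto

lemma lp_norm_on_triangle:
  assumes S: "finite S" and r: "1 \<le> r"
  shows "lp_norm_on r S (\<lambda>i. f i + g i) \<le> lp_norm_on r S f + lp_norm_on r S g"
proof (cases "lp_norm_on r S f + lp_norm_on r S g = 0")
  case True
  then have "\<forall>i\<in>S. f i = 0" "\<forall>i\<in>S. g i = 0"
    using lp_norm_on_eq_0_iff[OF S] lp_norm_on_nonneg r
    by (metis add_nonneg_eq_0_iff less_le_trans zero_less_one)+
  then show ?thesis by (simp add: lp_norm_on_def)
next
  case False
  define X Y where "X = lp_norm_on r S f" and "Y = lp_norm_on r S g"
  have XY: "0 \<le> X" "0 \<le> Y" "0 < X + Y"
    using False lp_norm_on_nonneg[of r S f] lp_norm_on_nonneg[of r S g] unfolding X_def Y_def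
    by linarith+
  define t where "t = Y / (X + Y)"
  have t: "0 \<le> t" "t \<le> 1" "(X + Y) * (1 - t) = X" "(X + Y) * t = Y"
    using XY unfolding t_def by (auto simp: field_simps)
  \<comment> \<open>also when the norm is \<open>0\<close>, since then \<open>h\<close> vanishes on \<open>S\<close>\<close>
  have scale: "\<bar>h i\<bar> = lp_norm_on r S h * (\<bar>h i\<bar> / lp_norm_on r S h)" if "i \<in> S" for h i
    using that lp_norm_on_eq_0_iff[OF S, of r h] r by auto
  have unit: "(\<Sum>i\<in>S. (\<bar>h i\<bar> / lp_norm_on r S h) powr r) \<le> 1" for h
    using r by (simp add: powr_divide lp_norm_on_nonneg flip: sum_divide_distrib lp_norm_on_powr)
  \<comment> \<open>convexity of \<open>x powr r\<close> with weights \<open>X/(X+Y)\<close>, \<open>Y/(X+Y)\<close> at the normalised values\<close>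
  have pointwise: "\<bar>f i + g i\<bar> powr r
      \<le> (X + Y) powr r * ((1 - t) * (\<bar>f i\<bar> / X) powr r + t * (\<bar>g i\<bar> / Y) powr r)"
    if "i \<in> S" for i
  proof -
    have "\<bar>f i + g i\<bar> \<le> (X + Y) * ((1 - t) * (\<bar>f i\<bar> / X) + t * (\<bar>g i\<bar> / Y))"
      using scale[OF that, of f] scale[OF that, of g] t unfolding X_def Y_def
      by (simp add: distrib_left mult.assoc[symmetric] abs_triangle_ineq)
    then have "\<bar>f i + g i\<bar> powr r \<le> ((X + Y) * ((1 - t) * (\<bar>f i\<bar> / X) + t * (\<bar>g i\<bar> / Y))) powr r"
      using r by (intro powr_mono2) auto
    also have "\<dots> = (X + Y) powr r * ((1 - t) * (\<bar>f i\<bar> / X) + t * (\<bar>g i\<bar> / Y)) powr r"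
      by (rule powr_mult)
    also have "\<dots> \<le> (X + Y) powr r * ((1 - t) * (\<bar>f i\<bar> / X) powr r + t * (\<bar>g i\<bar> / Y) powr r)"
      using convex_onD[OF convex_on_powr_nonneg[OF r], of t "\<bar>f i\<bar> / X" "\<bar>g i\<bar> / Y"] t XY
      by (intro mult_left_mono) auto
    finally show ?thesis .
  qed
  have "lp_norm_on r S (\<lambda>i. f i + g i) powr r = (\<Sum>i\<in>S. \<bar>f i + g i\<bar> powr r)"
    using r by (simp add: lp_norm_on_powr)
  also have "\<dots> \<le> (\<Sum>i\<in>S. (X + Y) powr r * ((1 - t) * (\<bar>f i\<bar> / X) powr r + t * (\<bar>g i\<bar> / Y) powr r))"
    by (rule sum_mono[OF pointwise])
  also have "\<dots> = (X + Y) powr r * (\<Sum>i\<in>S. (1 - t) * (\<bar>f i\<bar> / X) powr r + t * (\<bar>g i\<bar> / Y) powr r)"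
    by (rule sum_distrib_left[symmetric])
  also have "\<dots> = (X + Y) powr r * ((1 - t) * (\<Sum>i\<in>S. (\<bar>f i\<bar> / X) powr r)
      + t * (\<Sum>i\<in>S. (\<bar>g i\<bar> / Y) powr r))"
    by (simp only: sum.distrib sum_distrib_left)
  also have "\<dots> \<le> (X + Y) powr r * ((1 - t) * 1 + t * 1)"
    using unit[of f] unit[of g] t unfolding X_def Y_def
    by (intro mult_left_mono add_mono) auto
  also have "\<dots> = (X + Y) powr r" by simp
  finally have "lp_norm_on r S (\<lambda>i. f i + g i) powr r \<le> (X + Y) powr r" .
  then show ?thesis
    using powr_less_mono2[of r "X + Y" "lp_norm_on r S (\<lambda>i. f i + g i)"] XY r
    unfolding X_def Y_def by fastforce
qed

lemma lp_norm_on_diff_ge: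
  assumes "finite S" "1 \<le> r"
  shows "lp_norm_on r S f - lp_norm_on r S g \<le> lp_norm_on r S (\<lambda>i. f i - g i)"
  using lp_norm_on_triangle[OF assms, of "\<lambda>i. f i - g i" g] by simp

lemma lp_norm_on_diff_lower_bound:
  assumes G: "finite G" and r: "1 \<le> r"
    and f: "1 - \<delta> \<le> (\<Sum>i\<in>G. \<bar>f i\<bar> powr r)" "(\<Sum>i\<in>G. \<bar>f i\<bar> powr r) \<le> 1"
    and g: "(\<Sum>i\<in>G. \<bar>g i\<bar> powr r) \<le> \<delta>"
  shows "1 - \<delta> - \<delta> powr (1 / r) \<le> lp_norm_on r G (\<lambda>i. f i - g i)"
proof -
  have "0 \<le> (\<Sum>i\<in>G. \<bar>f i\<bar> powr r)"
    by (simp add: sum_nonneg)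
  then have "1 - \<delta> \<le> lp_norm_on r G f"
    using f powr_mono'[of "1 / r" 1 "\<Sum>i\<in>G. \<bar>f i\<bar> powr r"] r by (simp add: lp_norm_on_def)
  moreover have "lp_norm_on r G g \<le> \<delta> powr (1 / r)"
    unfolding lp_norm_on_def using g r by (intro powr_mono2) (auto intro: sum_nonneg)
  ultimately show ?thesis
    using lp_norm_on_diff_ge[OF G r, of f g] by linarith
qed

lemma sphere_lp_sum_powr:
  assumes "x \<in> sphere_lp r k" "0 < r"
  shows "(\<Sum>i\<in>{0<..k}. \<bar>x i\<bar> powr r) = 1"
proof -
  have "lp_norm_on r {1..k} x = 1"
    using assms(1) by (simp add: sphere_lp_def norm_lp_eq_lp_norm_on)
  then show ?thesis
    using lp_norm_on_powr[OF assms(2), of "{1..k}" x] by (simp add: atLeastSucAtMost_greaterThanAtMost)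
qed

section \<open>Sums of parity-constant sequences\<close>

lemma sum_greaterThanAtMost_concat:
  fixes a b c :: nat
  assumes "a \<le> b" "b \<le> c"
  shows "sum g {a<..b} + sum g {b<..c} = sum g {a<..c}"
proof -
  have "{a<..c} = {a<..b} \<union> {b<..c}"
    using assms by auto
  moreover have "sum g ({a<..b} \<union> {b<..c}) = sum g {a<..b} + sum g {b<..c}"
    by (rule sum.union_disjoint) auto
  ultimately show ?thesis
    by (simp only:)
qed

definition parity_constant_on :: "(nat \<Rightarrow> 'a) \<Rightarrow> nat set \<Rightarrow> bool" where
  "parity_constant_on h S \<longleftrightarrow> (\<forall>i\<in>S. \<forall>j\<in>S. even i = even j \<longrightarrow> h i = h j)"

lemma parity_constant_onD:
  "parity_constant_on h S \<Longrightarrow> i \<in> S \<Longrightarrow> j \<in> S \<Longrightarrow> even i = even j \<Longrightarrow> h i = h j"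
  unfolding parity_constant_on_def by blast

lemma parity_constant_on_comp:
  "parity_constant_on h S \<Longrightarrow> parity_constant_on (\<lambda>i. g (h i)) S"
  unfolding parity_constant_on_def by metis

lemma parity_constant_on_sum_shift:
  assumes "parity_constant_on h {p<..q}" "even s" "y + s \<le> q"
  shows "sum h {s + p<..s + y} = sum h {p<..y}"
proof -
  have "sum h {s + p<..s + y} = (\<Sum>i\<in>{p<..y}. h (s + i))"
    using sum.reindex[of "(+) s" "{p<..y}" h] by simp
  also have "\<dots> = sum h {p<..y}"
  proof (rule sum.cong)
    fix i
    assume "i \<in> {p<..y}"
    then have "s + i \<in> {p<..q}" "i \<in> {p<..q}" "even (s + i) = even i"
      using assms(2,3) by auto
    then show "h (s + i) = h i"
      by (rule parity_constant_onD[OF assms(1)])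
  qed simp
  finally show ?thesis .
qed

text \<open>An interval of length \<open>\<ell>\<close> at the start of a parity-constant stretch has at most
  a \<open>1/L\<close> fraction of the mass of the following \<open>2 L \<ell>\<close> points, which contain \<open>L\<close> disjoint
  translates of it by even amounts.\<close>
lemma parity_constant_on_sum_le:
  fixes h :: "nat \<Rightarrow> real"
  assumes h: "parity_constant_on h {p<..q}" and h0: "\<And>i. 0 \<le> h i"
    and y: "p \<le> y" "y + 2 * L * (y - p) \<le> q"
  shows "real L * sum h {p<..y} \<le> sum h {y<..q}"
proof -
  define len where "len = y - p"
  have "real j * sum h {p<..y} \<le> sum h {y<..y + 2 * len * j}" if "j \<le> L" for j
    using that
  proof (induction j)
    case 0
    then show ?case by simp
  next
    case (Suc j)
    let ?copy = "{2 * len * Suc j + p<..2 * len * Suc j + y}"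
    have "2 * len * Suc j \<le> 2 * len * L"
      using Suc.prems by (rule mult_le_mono2)
    then have "y + 2 * len * Suc j \<le> q"
      using y(2) unfolding len_def by (simp add: mult.commute mult.left_commute)
    then have "sum h ?copy = sum h {p<..y}"
      by (intro parity_constant_on_sum_shift[OF h]) (auto simp: add.commute)
    moreover have "?copy \<subseteq> {y + 2 * len * j<..y + 2 * len * Suc j}"
      using y(1) unfolding len_def by auto
    then have "sum h ?copy \<le> sum h {y + 2 * len * j<..y + 2 * len * Suc j}"
      by (intro sum_mono2) (auto simp: h0)
    moreover have "sum h {y<..y + 2 * len * j} + sum h {y + 2 * len * j<..y + 2 * len * Suc j}
        = sum h {y<..y + 2 * len * Suc j}"
      by (intro sum_greaterThanAtMost_concat) auto
    ultimately show ?case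
      using Suc by (simp add: algebra_simps)
  qed
  from this[of L] have "real L * sum h {p<..y} \<le> sum h {y<..y + 2 * len * L}"
    by simp
  also have "\<dots> \<le> sum h {y<..q}"
    using y(2) unfolding len_def by (intro sum_mono2) (auto simp: h0 mult.commute mult.left_commute)
  finally show ?thesis .
qed

section \<open>Blocks of an increasing tuple\<close>

lemma strict_mono_on_atLeastAtMost_SucI:
  fixes f :: "nat \<Rightarrow> 'a::order"
  assumes "\<And>s. a \<le> s \<Longrightarrow> s < b \<Longrightarrow> f s < f (Suc s)"
  shows "strict_mono_on {a..b} f"
proof (rule strict_mono_onI)
  fix r s
  assume "r \<in> {a..b}" "s \<in> {a..b}" "r < s"
  then have "Suc r \<le> s" "a \<le> r" "s \<le> b" by auto
  then show "f r < f s"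
  proof (induction s rule: dec_induct)
    case base
    then show ?case using assms by simp
  next
    case (step s)
    then show ?case using assms[of s] by (meson Suc_le_lessD le_trans less_imp_le_nat order.strict_trans)
  qed
qed

lemma incr_tuples_strict_mono_on: "w \<in> incr_tuples M d \<Longrightarrow> strict_mono_on {1..d} w"
  unfolding incr_tuples_def by (auto intro: strict_mono_on_atLeastAtMost_SucI)

definition block :: "(nat \<Rightarrow> nat) \<Rightarrow> nat \<Rightarrow> nat set" where
  "block w s = {tup w (s - 1)<..w s}"

lemma tup_pred_le:
  assumes "strict_mono_on {1..d} w" "s \<in> {1..d}"
  shows "tup w (s - 1) \<le> w s"
proof (cases "s = 1")
  case False
  then have "s - 1 \<in> {1..d}"
    using assms(2) by auto
  then show ?thesis
    using strict_mono_on_leD[OF assms(1) _ assms(2)] by (simp add: tup_def)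
qed (simp add: tup_def)

lemma blocks_disjoint:
  assumes w: "strict_mono_on {1..d} w" and "s \<in> {1..d}" "s' \<in> {1..d}" "s \<noteq> s'"
  shows "block w s \<inter> block w s' = {}"
proof -
  have "block w s \<inter> block w s' = {}" if "s \<in> {1..d}" "s' \<in> {1..d}" "s < s'" for s s'
  proof -
    have "w s \<le> tup w (s' - 1)"
      using that strict_mono_on_leD[OF w, of s "s' - 1"] by (auto simp: tup_def)
    then show ?thesis by (auto simp: block_def)
  qed
  then show ?thesis
    using assms by (metis Int_commute linorder_neqE_nat)
qed

lemma UN_blocks:
  assumes "strict_mono_on {1..d} w"
  shows "(\<Union>s\<in>{1..d}. block w s) = {0<..tup w d}"
  using assms
proof (induction d)
  case 0
  then show ?case by (simp add: tup_def)
next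
  case (Suc d)
  have "tup w d \<le> w (Suc d)"
    using tup_pred_le[OF Suc.prems, of "Suc d"] by simp
  moreover have "strict_mono_on {1..d} w"
    using Suc.prems by (rule monotone_on_subset) auto
  then have "(\<Union>s\<in>{1..d}. block w s) = {0<..tup w d}"
    by (rule Suc.IH)
  ultimately show ?case
    by (auto simp: atLeastAtMostSuc_conv block_def tup_def)
qed

lemma block_subset:
  assumes "strict_mono_on {1..d} w" "s \<in> {1..d}"
  shows "block w s \<subseteq> {0<..tup w d}"
  using UN_blocks[OF assms(1)] assms(2) by blast

lemma sum_blocks:
  assumes "strict_mono_on {1..d} w"
  shows "(\<Sum>s\<in>{1..d}. sum h (block w s)) = sum h {0<..tup w d}"
proof -
  have "sum h (\<Union>s\<in>{1..d}. block w s) = (\<Sum>s\<in>{1..d}. sum h (block w s))"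
    using blocks_disjoint[OF assms] by (intro sum.UNION_disjoint) (auto simp: block_def)
  then show ?thesis
    using UN_blocks[OF assms] by simp
qed

lemma sum_UN_block_heads:
  assumes w: "strict_mono_on {1..d} w" and y: "\<And>s. s \<in> {1..d} \<Longrightarrow> y s \<le> w s"
  shows "sum h (\<Union>s\<in>{1..d}. {tup w (s - 1)<..y s}) = (\<Sum>s\<in>{1..d}. sum h {tup w (s - 1)<..y s})"
proof (rule sum.UNION_disjoint)
  show "\<forall>s\<in>{1..d}. \<forall>s'\<in>{1..d}. s \<noteq> s' \<longrightarrow> {tup w (s - 1)<..y s} \<inter> {tup w (s' - 1)<..y s'} = {}"
    using blocks_disjoint[OF w] y unfolding block_def by fastforce
qed auto

lemma sum_block_heads_tails:
  fixes h :: "nat \<Rightarrow> real"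
  assumes h0: "\<And>i. 0 \<le> h i" and w: "strict_mono_on {1..d} w"
    and h: "\<And>s. s \<in> {1..d} \<Longrightarrow> parity_constant_on h (block w s)"
    and y: "\<And>s. s \<in> {1..d} \<Longrightarrow> tup w (s - 1) \<le> y s \<and> y s + 2 * L * (y s - tup w (s - 1)) \<le> w s"
  shows "real L * (\<Sum>s\<in>{1..d}. sum h {tup w (s - 1)<..y s}) \<le> sum h {0<..tup w d}"
    and "real L * sum h {0<..tup w d} \<le> (real L + 1) * (\<Sum>s\<in>{1..d}. sum h {y s<..w s})"
proof -
  have split: "sum h {tup w (s - 1)<..y s} + sum h {y s<..w s} = sum h (block w s)"
    if "s \<in> {1..d}" for s
    using y[OF that] unfolding block_def by (intro sum_greaterThanAtMost_concat) auto
  have head: "real L * sum h {tup w (s - 1)<..y s} \<le> sum h {y s<..w s}" if "s \<in> {1..d}" for s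
    using h[OF that] y[OF that] h0 unfolding block_def by (intro parity_constant_on_sum_le) auto
  have "real L * (\<Sum>s\<in>{1..d}. sum h {tup w (s - 1)<..y s})
      = (\<Sum>s\<in>{1..d}. real L * sum h {tup w (s - 1)<..y s})"
    by (rule sum_distrib_left)
  also have "\<dots> \<le> (\<Sum>s\<in>{1..d}. sum h (block w s))"
    using head split h0 by (intro sum_mono) (smt (verit) sum_nonneg)
  also have "\<dots> = sum h {0<..tup w d}"
    by (rule sum_blocks[OF w])
  finally show "real L * (\<Sum>s\<in>{1..d}. sum h {tup w (s - 1)<..y s}) \<le> sum h {0<..tup w d}" .
  have "real L * sum h {0<..tup w d} = (\<Sum>s\<in>{1..d}. real L * sum h (block w s))"
    unfolding sum_blocks[OF w, symmetric] by (rule sum_distrib_left)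
  also have "\<dots> \<le> (\<Sum>s\<in>{1..d}. (real L + 1) * sum h {y s<..w s})"
  proof (rule sum_mono)
    fix s
    assume s: "s \<in> {1..d}"
    have "real L * sum h (block w s)
        = real L * sum h {tup w (s - 1)<..y s} + real L * sum h {y s<..w s}"
      by (simp flip: split[OF s] add: distrib_left)
    also have "\<dots> \<le> (real L + 1) * sum h {y s<..w s}"
      using head[OF s] by (simp add: algebra_simps)
    finally show "real L * sum h (block w s) \<le> (real L + 1) * sum h {y s<..w s}" .
  qed
  also have "\<dots> = (real L + 1) * (\<Sum>s\<in>{1..d}. sum h {y s<..w s})"
    by (simp add: sum_distrib_left)
  finally show "real L * sum h {0<..tup w d} \<le> (real L + 1) * (\<Sum>s\<in>{1..d}. sum h {y s<..w s})" .
qed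

section \<open>The step vectors \<open>x(m,u,k)\<close>\<close>

lemma xvec_off_blocks:
  assumes "\<forall>s\<in>{1..d}. i \<notin> block w s"
  shows "xvec d w a b c k i = c * indic {tup w d<..k} i"
proof -
  have "(\<Sum>s\<in>{1..d}. f s * indic (block w s \<inter> P) i) = 0" for f :: "nat \<Rightarrow> real" and P
    using assms by (intro sum.neutral) (auto simp: indic_def)
  then show ?thesis
    unfolding xvec_def block_def[symmetric] by simp
qed

lemma xvec_on_block:
  assumes w: "strict_mono_on {1..d} w" and s: "s \<in> {1..d}" and i: "i \<in> block w s"
  shows "xvec d w a b c k i = (if even i then a s else b s)"
proof -
  have other: "i \<notin> block w s'" if "s' \<in> {1..d}" "s' \<noteq> s" for s'
    using blocks_disjoint[OF w s that(1)] that(2) i by blast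
  have "i \<le> tup w d"
    using block_subset[OF w s] i by auto
  then have tail: "indic {tup w d<..k} i = 0"
    by (simp add: indic_def)
  have blocks: "(\<Sum>s'\<in>{1..d}. f s' * indic (block w s' \<inter> P) i) = f s * indic P i"
    for f :: "nat \<Rightarrow> real" and P
    using other s i by (subst sum.remove[of _ s]) (auto simp: indic_def intro!: sum.neutral)
  show ?thesis
    unfolding xvec_def block_def[symmetric] blocks tail by (simp add: indic_def)
qed

lemma xvec_tail:
  assumes "strict_mono_on {1..d} w" "i \<in> {tup w d<..k}"
  shows "xvec d w a b c k i = c"
proof -
  have "\<forall>s\<in>{1..d}. i \<notin> block w s"
    using block_subset[OF assms(1)] assms(2) by fastforce
  then show ?thesis
    using assms(2) by (simp add: xvec_off_blocks indic_def)
qed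

lemma xvec_outside:
  assumes "strict_mono_on {1..d} w" "tup w d \<le> k" "i \<notin> {1..k}"
  shows "xvec d w a b c k i = 0"
proof -
  have "\<forall>s\<in>{1..d}. i \<notin> block w s"
    using block_subset[OF assms(1)] assms(2,3) by fastforce
  then show ?thesis
    using assms(3) by (auto simp: xvec_off_blocks indic_def)
qed

lemma in_sphere_uD:
  assumes "in_sphere_u d a b c"
  shows "\<forall>s\<in>{1..d}. \<bar>a s\<bar> \<le> 1 \<and> \<bar>b s\<bar> \<le> 1" and "\<bar>c\<bar> \<le> 1"
    and "(\<exists>s\<in>{1..d}. \<bar>a s\<bar> = 1 \<or> \<bar>b s\<bar> = 1) \<or> \<bar>c\<bar> = 1"
proof -
  define U where "U = (\<lambda>s. \<bar>a s\<bar>) ` {1..d} \<union> (\<lambda>s. \<bar>b s\<bar>) ` {1..d} \<union> {\<bar>c\<bar>}"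
  have "{\<bar>a s\<bar> | s. s \<in> {1..d}} \<union> {\<bar>b s\<bar> | s. s \<in> {1..d}} \<union> {\<bar>c\<bar>} = U"
    unfolding U_def by blast
  then have U: "finite U" "Max U = 1"
    using assms unfolding in_sphere_u_def U_def by auto
  have "y \<le> 1" if "y \<in> U" for y
    using Max_ge[OF U(1) that] U(2) by simp
  then show "\<forall>s\<in>{1..d}. \<bar>a s\<bar> \<le> 1 \<and> \<bar>b s\<bar> \<le> 1" and "\<bar>c\<bar> \<le> 1"
    unfolding U_def by auto
  have "1 \<in> U"
    using Max_in[OF U(1)] U(2) unfolding U_def by auto
  then show "(\<exists>s\<in>{1..d}. \<bar>a s\<bar> = 1 \<or> \<bar>b s\<bar> = 1) \<or> \<bar>c\<bar> = 1"
    unfolding U_def by auto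
qed

lemma norm_inf_eq_1I:
  assumes "\<forall>i\<in>{1..k}. \<bar>x i\<bar> \<le> 1" and "\<exists>i\<in>{1..k}. \<bar>x i\<bar> = 1"
  shows "norm_inf k x = 1"
  unfolding norm_inf_def using assms by (intro Max_eqI) auto

lemma abs_xvec_le_1:
  assumes w: "strict_mono_on {1..d} w" and u: "in_sphere_u d a b c"
  shows "\<bar>xvec d w a b c k i\<bar> \<le> 1"
proof (cases "\<exists>s\<in>{1..d}. i \<in> block w s")
  case True
  then obtain s where "s \<in> {1..d}" "i \<in> block w s" by blast
  then show ?thesis
    using in_sphere_uD(1)[OF u] by (simp add: xvec_on_block[OF w])
next
  case False
  then show ?thesis
    using in_sphere_uD(2)[OF u] by (simp add: xvec_off_blocks indic_def abs_mult)
qed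

lemma block_has_parity:
  assumes "tup w (s - 1) + 2 \<le> w s"
  shows "\<exists>i\<in>block w s. even i = P"
proof (cases "even (Suc (tup w (s - 1))) = P")
  case True
  then show ?thesis
    using assms by (intro bexI[of _ "Suc (tup w (s - 1))"]) (auto simp: block_def)
next
  case False
  then show ?thesis
    using assms by (intro bexI[of _ "Suc (Suc (tup w (s - 1)))"]) (auto simp: block_def)
qed

lemma xvec_attains_1:
  assumes w: "strict_mono_on {1..d} w" and u: "in_sphere_u d a b c" and k: "tup w d < k"
    and long: "\<forall>s\<in>{1..d}. tup w (s - 1) + 2 \<le> w s"
  shows "\<exists>i\<in>{1..k}. \<bar>xvec d w a b c k i\<bar> = 1"
proof -
  consider s where "s \<in> {1..d}" "\<bar>a s\<bar> = 1 \<or> \<bar>b s\<bar> = 1" | "\<bar>c\<bar> = 1"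
    using in_sphere_uD(3)[OF u] by blast
  then show ?thesis
  proof cases
    case (1 s)
    note s = 1(1) and ab = 1(2)
    obtain i where i: "i \<in> block w s" "even i = (\<bar>a s\<bar> = 1)"
      using block_has_parity long s by blast
    have "i \<in> {1..k}"
      using block_subset[OF w s] i(1) k by fastforce
    moreover have "\<bar>xvec d w a b c k i\<bar> = 1"
      using i ab by (auto simp: xvec_on_block[OF w s])
    ultimately show ?thesis by blast
  next
    case 2
    then show ?thesis
      using xvec_tail[OF w, of k] k by (intro bexI[of _ k]) auto
  qed
qed

lemma xvec_in_sphere_inf:
  assumes w: "strict_mono_on {1..d} w" and u: "in_sphere_u d a b c" and k: "tup w d < k"
    and long: "\<forall>s\<in>{1..d}. tup w (s - 1) + 2 \<le> w s"
  shows "xvec d w a b c k \<in> sphere_inf k"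
proof -
  have "norm_inf k (xvec d w a b c k) = 1"
    using abs_xvec_le_1[OF w u] xvec_attains_1[OF assms] by (intro norm_inf_eq_1I) auto
  then show ?thesis
    unfolding sphere_inf_def using xvec_outside[OF w] k by auto
qed

lemma step_preserving_parity_constant_on_block:
  assumes F: "step_preserving k F" and x: "xvec d w a b c k \<in> sphere_inf k"
    and w: "strict_mono_on {1..d} w" and k: "tup w d \<le> k" and s: "s \<in> {1..d}"
  shows "parity_constant_on (F (xvec d w a b c k)) (block w s)"
  unfolding parity_constant_on_def
proof (intro ballI impI)
  fix i j
  assume ij: "i \<in> block w s" "j \<in> block w s" "even i = even j"
  then have "xvec d w a b c k i = xvec d w a b c k j"
    by (simp add: xvec_on_block[OF w s])
  moreover have "i \<in> {1..k}" "j \<in> {1..k}"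
    using block_subset[OF w s] ij(1,2) k by fastforce+
  ultimately show "F (xvec d w a b c k) i = F (xvec d w a b c k) j"
    using F x unfolding step_preserving_def by blast
qed

text \<open>By \<open>gm\<close> and \<open>gn\<close>, each interval \<open>(n\<^sub>s\<^sub>-\<^sub>1, m\<^sub>s]\<close> of \<open>G\<close> is the long final piece of the
  \<open>s\<close>-th block of \<open>m\<close> and the short initial piece of the \<open>s\<close>-th block of \<open>n\<close>.\<close>
lemma step_preserving_mass_on_gaps:
  fixes d k L :: nat and m n :: "nat \<Rightarrow> nat" and a b :: "nat \<Rightarrow> real" and c :: real
    and F :: "(nat \<Rightarrow> real) \<Rightarrow> nat \<Rightarrow> real"
  defines "G \<equiv> \<Union>s\<in>{1..d}. {tup n (s - 1)<..m s}"
    and "xm \<equiv> xvec d m a b c k" and "xn \<equiv> xvec d n a b c k"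
  assumes r: "0 < r" and L: "1 \<le> L"
    and F_maps: "\<forall>x\<in>sphere_inf k. F x \<in> sphere_lp r k" and F_step: "step_preserving k F"
    and wm: "strict_mono_on {1..d} m" and wn: "strict_mono_on {1..d} n"
    and xm: "xm \<in> sphere_inf k" and xn: "xn \<in> sphere_inf k"
    and k: "tup m d \<le> k" "tup n d \<le> k"
    and gm: "\<And>s. s \<in> {1..d} \<Longrightarrow>
      tup m (s - 1) \<le> tup n (s - 1) \<and> tup n (s - 1) + 2 * L * (tup n (s - 1) - tup m (s - 1)) \<le> m s"
    and gn: "\<And>s. s \<in> {1..d} \<Longrightarrow>
      tup n (s - 1) \<le> m s \<and> m s + 2 * L * (m s - tup n (s - 1)) \<le> n s"
    and F_zero: "\<forall>i\<in>{tup m d<..k}. F xm i = 0"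
  shows "1 - 1 / real L \<le> (\<Sum>i\<in>G. \<bar>F xm i\<bar> powr r)"
    and "(\<Sum>i\<in>G. \<bar>F xm i\<bar> powr r) \<le> 1"
    and "(\<Sum>i\<in>G. \<bar>F xn i\<bar> powr r) \<le> 1 / real L"
proof -
  define hm hn where "hm = (\<lambda>i. \<bar>F xm i\<bar> powr r)" and "hn = (\<lambda>i. \<bar>F xn i\<bar> powr r)"
  have h0: "0 \<le> hm i" "0 \<le> hn i" for i
    unfolding hm_def hn_def by simp_all
  have total: "sum hm {0<..k} = 1" "sum hn {0<..k} = 1"
    using sphere_lp_sum_powr F_maps xm xn r unfolding hm_def hn_def by blast+
  have parity: "parity_constant_on (\<lambda>i. \<bar>F (xvec d w a b c k) i\<bar> powr r) (block w s)"
    if "xvec d w a b c k \<in> sphere_inf k" "strict_mono_on {1..d} w" "tup w d \<le> k" "s \<in> {1..d}"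
    for w s
    using step_preserving_parity_constant_on_block[OF F_step that] by (rule parity_constant_on_comp)
  note parity_m = parity[OF xm[unfolded xm_def] wm k(1), folded xm_def hm_def]
  note parity_n = parity[OF xn[unfolded xn_def] wn k(2), folded xn_def hn_def]
  have mn: "m s \<le> n s" if "s \<in> {1..d}" for s
    using gn[OF that] by linarith
  have sum_G: "sum h G = (\<Sum>s\<in>{1..d}. sum h {tup n (s - 1)<..m s})" for h :: "nat \<Rightarrow> real"
    unfolding G_def using sum_UN_block_heads[OF wn mn] .
  have G: "G \<subseteq> {0<..tup n d}"
    unfolding G_def using block_subset[OF wn] mn unfolding block_def by fastforce
  have Lpos: "0 < real L"
    using L by simp
  have "sum hm {tup m d<..k} = 0"
    using F_zero unfolding hm_def by (intro sum.neutral) (simp add: r)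
  then have "sum hm {0<..tup m d} = 1"
    using total(1) sum_greaterThanAtMost_concat[OF _ k(1), of 0 hm] by simp
  then have "real L \<le> (real L + 1) * sum hm G"
    using sum_block_heads_tails(2)[OF h0(1) wm parity_m gm] by (simp add: sum_G)
  then have "real L / (real L + 1) \<le> sum hm G"
    using Lpos by (simp add: divide_le_eq mult.commute)
  moreover have "1 - 1 / real L \<le> real L / (real L + 1)"
    using Lpos by (simp add: field_simps)
  ultimately show "1 - 1 / real L \<le> (\<Sum>i\<in>G. \<bar>F xm i\<bar> powr r)"
    unfolding hm_def by simp
  have "sum hm G \<le> sum hm {0<..k}"
    using G k(2) h0 by (intro sum_mono2) auto
  then show "(\<Sum>i\<in>G. \<bar>F xm i\<bar> powr r) \<le> 1"
    using total(1) unfolding hm_def by simp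
  have "real L * sum hn G \<le> sum hn {0<..tup n d}"
    using sum_block_heads_tails(1)[OF h0(2) wn parity_n gn] by (simp add: sum_G)
  also have "\<dots> \<le> sum hn {0<..k}"
    using k(2) h0 by (intro sum_mono2) auto
  finally show "(\<Sum>i\<in>G. \<bar>F xn i\<bar> powr r) \<le> 1 / real L"
    using total(2) Lpos unfolding hn_def by (simp add: le_divide_eq mult.commute)
qed

section \<open>Interleaved powers of \<open>A\<close>\<close>

lemma powers_gap:
  fixes A :: nat
  assumes "2 \<le> A" "x \<in> {A ^ (j - 1) | j. j \<ge> 1}" "y \<in> {A ^ (j - 1) | j. j \<ge> 1}" "x < y"
  shows "A * x \<le> y"
proof -
  obtain i j where ij: "x = A ^ i" "y = A ^ j"
    using assms(2,3) by blast
  then have "i < j"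
    using assms(1,4) by (simp add: power_strict_increasing_iff)
  then have "A ^ Suc i \<le> A ^ j"
    using assms(1) by (intro power_increasing) auto
  then show ?thesis
    using ij by simp
qed

lemma interleaved_powers_gaps:
  fixes A L :: nat
  defines "P \<equiv> {A ^ (j - 1) | j. j \<ge> 1}"
  assumes L: "1 \<le> L" "2 * L + 1 \<le> A"
    and m: "m \<in> incr_tuples P d" and n: "n \<in> incr_tuples P d"
    and mn1: "\<forall>s\<in>{1..d}. m s < n s" and mn2: "\<forall>s\<in>{1..<d}. n s < m (Suc s)"
    and s: "s \<in> {1..d}"
  shows "tup m (s - 1) \<le> tup n (s - 1) \<and> tup n (s - 1) + 2 * L * (tup n (s - 1) - tup m (s - 1)) \<le> m s"
    and "tup n (s - 1) \<le> m s \<and> m s + 2 * L * (m s - tup n (s - 1)) \<le> n s"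
    and "tup n (s - 1) + 2 \<le> n s"
proof -
  have A: "2 \<le> A"
    using L by simp
  have mP: "m s \<in> P" and nP: "n s \<in> P"
    using m n s unfolding incr_tuples_def by auto
  then have "0 < m s"
    unfolding P_def using A by auto
  have mn: "A * m s \<le> n s"
    using powers_gap[OF A] mP nP mn1 s unfolding P_def by blast
  have nm: "A * tup n (s - 1) \<le> m s \<and> tup m (s - 1) \<le> tup n (s - 1)"
  proof (cases "s = 1")
    case False
    then have "s - 1 \<in> {1..<d}" "Suc (s - 1) = s"
      using s by auto
    then have "n (s - 1) < m s"
      using mn2 by metis
    moreover have "m (s - 1) < n (s - 1)" "n (s - 1) \<in> P"
      using mn1 n \<open>s - 1 \<in> {1..<d}\<close> unfolding incr_tuples_def by simp_all
    ultimately show ?thesis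
      using powers_gap[OF A, of "n (s - 1)" "m s"] mP False unfolding P_def tup_def by auto
  qed (simp add: tup_def)
  have gaps: "(2 * L + 1) * tup n (s - 1) \<le> m s" "(2 * L + 1) * m s \<le> n s"
    using nm mn L(2) by (meson le_trans mult_le_mono1)+
  have "2 * L * (tup n (s - 1) - tup m (s - 1)) \<le> 2 * L * tup n (s - 1)"
    "2 * L * (m s - tup n (s - 1)) \<le> 2 * L * m s" "3 * m s \<le> (2 * L + 1) * m s"
    "(2 * L + 1) * tup n (s - 1) = 2 * L * tup n (s - 1) + tup n (s - 1)"
    "(2 * L + 1) * m s = 2 * L * m s + m s"
    using L(1) by simp_all
  then show "tup m (s - 1) \<le> tup n (s - 1) \<and> tup n (s - 1) + 2 * L * (tup n (s - 1) - tup m (s - 1)) \<le> m s"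
    and "tup n (s - 1) \<le> m s \<and> m s + 2 * L * (m s - tup n (s - 1)) \<le> n s"
    and "tup n (s - 1) + 2 \<le> n s"
    using gaps nm \<open>0 < m s\<close> by linarith+
qed

lemma gap_factor_bounds:
  fixes r \<epsilon> :: real and A L :: nat
  assumes r: "1 \<le> r" and eps: "0 < \<epsilon>" and A: "A = nat \<lceil>(8 / \<epsilon> + 3) powr r\<rceil>"
    and L: "L = (A - 1) div 2"
  shows "1 \<le> L" and "2 * L + 1 \<le> A" and "1 / real L + (1 / real L) powr (1 / r) < \<epsilon>"
proof -
  define B where "B = 8 / \<epsilon> + 3"
  have B: "3 < B"
    using eps unfolding B_def by simp
  have "B \<le> B powr r"
    using powr_mono[OF r, of B] B by simp
  moreover have BA: "B powr r \<le> real A"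
    unfolding A B_def by (rule real_nat_ceiling_ge)
  ultimately have "3 < real A"
    using B by linarith
  then have "4 \<le> A"
    by simp
  then show "1 \<le> L" and "2 * L + 1 \<le> A"
    unfolding L by presburger+
  have "A \<le> 4 * L"
    using \<open>4 \<le> A\<close> unfolding L by presburger
  then have "1 / real L \<le> 4 / real A"
    using \<open>1 \<le> L\<close> \<open>4 \<le> A\<close> by (simp add: divide_simps)
  also have "\<dots> \<le> 4 / B powr r"
    using BA B \<open>3 < real A\<close> by (intro divide_left_mono) auto
  finally have "(1 / real L) powr (1 / r) \<le> (4 / B powr r) powr (1 / r)"
    using r by (intro powr_mono2) auto
  also have "\<dots> = 4 powr (1 / r) / B"
    using B r by (simp add: powr_divide powr_powr)
  also have "\<dots> \<le> 4 / B"
    using powr_mono[of "1 / r" 1 4] r B by (simp add: divide_right_mono)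
  finally have "(1 / real L) powr (1 / r) \<le> 4 / B" .
  moreover have "1 / real L \<le> (1 / real L) powr (1 / r)"
    using powr_mono'[of "1 / r" 1 "1 / real L"] r \<open>1 \<le> L\<close> by simp
  moreover have "8 / B < \<epsilon>"
    using eps unfolding B_def by (simp add: field_simps)
  ultimately show "1 / real L + (1 / real L) powr (1 / r) < \<epsilon>"
    by linarith
qed

theorem proposition3p5:
  fixes r \<epsilon> :: real and d k A :: nat
    and m n :: "nat \<Rightarrow> nat" and a b :: "nat \<Rightarrow> real" and c :: real
    and F :: "(nat \<Rightarrow> real) \<Rightarrow> (nat \<Rightarrow> real)"
  assumes r: "1 \<le> r" and d: "d \<ge> 1" and eps: "\<epsilon> > 0"
    and A: "A = nat \<lceil>(8 / \<epsilon> + 3) powr r\<rceil>"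
    and m: "m \<in> incr_tuples {A ^ (j - 1) | j. j \<ge> 1} d"
    and n: "n \<in> incr_tuples {A ^ (j - 1) | j. j \<ge> 1} d"
    and mn1: "\<forall>s\<in>{1..d}. m s < n s"
    and mn2: "\<forall>s\<in>{1..<d}. n s < m (Suc s)"
    and k: "k > n d"
    and u: "in_sphere_u d a b c"
    and F_maps: "\<forall>x\<in>sphere_inf k. F x \<in> sphere_lp r k"
    and F_step: "step_preserving k F"
    and xm_dom: "xvec d m a b c k \<in> sphere_inf k"
    and F_zero: "\<forall>i\<in>{m d<..k}. F (xvec d m a b c k) i = 0"
  shows "norm_lp r k (\<lambda>i. F (xvec d m a b c k) i - F (xvec d n a b c k) i) > 1 - \<epsilon>"
proof -
  define L where "L = (A - 1) div 2"
  note L = gap_factor_bounds[OF r eps A L_def]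
  note gaps = interleaved_powers_gaps[OF L(1,2) m n mn1 mn2]
  note wm = incr_tuples_strict_mono_on[OF m] and wn = incr_tuples_strict_mono_on[OF n]
  have ends: "tup m d = m d" "tup n d = n d" "m d < n d"
    using d mn1 by (auto simp: tup_def)
  have xn_dom: "xvec d n a b c k \<in> sphere_inf k"
    using xvec_in_sphere_inf[OF wn u] gaps(3) ends k by simp
  define G where "G = (\<Union>s\<in>{1..d}. {tup n (s - 1)<..m s})"
  have G: "finite G" "G \<subseteq> {1..k}"
    unfolding G_def using block_subset[OF wn] gaps(2) ends k unfolding block_def by fastforce+
  note mass = step_preserving_mass_on_gaps[OF _ L(1) F_maps F_step wm wn xm_dom xn_dom _ _ gaps(1,2),
      folded G_def]
  have "1 - \<epsilon> < 1 - 1 / real L - (1 / real L) powr (1 / r)"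
    using L(3) by linarith
  also have "\<dots> \<le> lp_norm_on r G (\<lambda>i. F (xvec d m a b c k) i - F (xvec d n a b c k) i)"
    using mass ends k F_zero r by (intro lp_norm_on_diff_lower_bound[OF G(1) r]) auto
  also have "\<dots> \<le> norm_lp r k (\<lambda>i. F (xvec d m a b c k) i - F (xvec d n a b c k) i)"
    unfolding norm_lp_eq_lp_norm_on using G r by (intro lp_norm_on_mono) auto
  finally show ?thesis .
qed

end
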